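(* Let $q$ be a prime power, $d\ge 1$, let $B$ be a non-degenerate bilinear form on $\mathbb{F}_q^d$, and let $\lambda\in\mathbb{F}_q^{*}$. For every nonempty subset $V\subseteq\mathbb{F}_q^d$, \[ \sum_{\mathbf{v}\in\mathbb{F}_q^d}\Big(|N^{\lambda}_V(\mathbf{v})|-\frac{|V|}{q}\Big)^2 < q^{d-1}|V|. \]
   Context: $B:\mathbb{F}_q^d\times\mathbb{F}_q^d\to\mathbb{F}_q$ is bilinear and non-degenerate. For $\mathbf{v}\in\mathbb{F}_q^d$, $N^{\lambda}(\mathbf{v})=\{\mathbf{u}\in\mathbb{F}_q^d: B(\mathbf{v},\mathbf{u})=\lambda\}$, and for $V\subseteq\mathbb{F}_q^d$, $N^{\lambda}_V(\mathbf{v})=N^{\lambda}(\mathbf{v})\cap V$. $\mathbb{F}_q^*=\mathbb{F}_q\setminus\{0\}$. *)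

theory Defs
  imports "HOL-Analysis.Analysis"
begin

definition bilinear_form :: "('a::field ^ 'n \<Rightarrow> 'a ^ 'n \<Rightarrow> 'a) \<Rightarrow> bool" where
  "bilinear_form B \<longleftrightarrow>
     (\<forall>x y z. B (x + y) z = B x z + B y z) \<and>
     (\<forall>c x z. B (c *s x) z = c * B x z) \<and>
     (\<forall>x y z. B x (y + z) = B x y + B x z) \<and>
     (\<forall>c x z. B x (c *s z) = c * B x z)"

definition nondegenerate :: "('a::field ^ 'n \<Rightarrow> 'a ^ 'n \<Rightarrow> 'a) \<Rightarrow> bool" where
  "nondegenerate B \<longleftrightarrow>
     (\<forall>v. (\<forall>u. B v u = 0) \<longrightarrow> v = 0) \<and>
     (\<forall>u. (\<forall>v. B v u = 0) \<longrightarrow> u = 0)"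

definition Nlam :: "('a ^ 'n \<Rightarrow> 'a ^ 'n \<Rightarrow> 'a) \<Rightarrow> 'a \<Rightarrow> 'a ^ 'n \<Rightarrow> ('a ^ 'n) set" where
  "Nlam B lam v = {u. B v u = lam}"

definition NlamV :: "('a ^ 'n \<Rightarrow> 'a ^ 'n \<Rightarrow> 'a) \<Rightarrow> 'a \<Rightarrow> ('a ^ 'n) set \<Rightarrow> 'a ^ 'n \<Rightarrow> ('a ^ 'n) set" where
  "NlamV B lam V v = Nlam B lam v \<inter> V"

end

theory Submission
  imports Defs
begin

(*
  Write A(v) = |N^lambda_V(v)|, M = q^(d-1), W = V - {0} and x = |W|.  Since B v 0 = 0,
  only W contributes to A.  By double counting,
    sum_v A(v)   = sum_{u in W} |{v. B v u = lambda}|,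
    sum_v A(v)^2 = sum_{u,w in W} |{v. B v u = lambda, B v w = lambda}|.
  For u <> 0 the level set {v. B v u = a} is an affine hyperplane with M elements, and
  for distinct nonzero u, w the intersection of the two lambda-level sets has at most
  M/q elements (it is empty if w is a multiple of u, otherwise of codimension 2).
  Hence sum_v A = x M and q sum_v A^2 <= x^2 M + x (q-1) M.  Expanding the square,
    q sum_v (A(v) - |V|/q)^2 <= M ((|V| - x)^2 + x (q-1)) < M q |V|,
  as x = |V| or x = |V| - 1, |V| >= 1 and q >= 2.
*)

section \<open>Double counting\<close>

lemma sum_card_filter_swap:
  assumes "finite U" "finite V"
  shows "(\<Sum>v\<in>U. card {u\<in>V. R v u}) = (\<Sum>u\<in>V. card {v\<in>U. R v u})"
proof -
  have count: "card {x\<in>X. P x} = (\<Sum>x\<in>X. if P x then 1 else 0)" if "finite X" for X P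
    using sum.inter_filter[of X "\<lambda>_. 1 :: nat" P] that by simp
  have "(\<Sum>v\<in>U. card {u\<in>V. R v u}) = (\<Sum>v\<in>U. \<Sum>u\<in>V. if R v u then 1 else 0)"
    using assms by (simp add: count)
  also have "\<dots> = (\<Sum>u\<in>V. \<Sum>v\<in>U. if R v u then 1 else 0)"
    by (rule sum.swap)
  also have "\<dots> = (\<Sum>u\<in>V. card {v\<in>U. R v u})"
    using assms by (simp add: count)
  finally show ?thesis .
qed

text \<open>Second moment of the row counts: the square of a row count counts pairs in that
  row, so double counting over pairs (u, w) applies.\<close>

lemma sum_card_filter_square:
  assumes "finite U" "finite V"
  shows "(\<Sum>v\<in>U. (card {u\<in>V. R v u})\<^sup>2) = (\<Sum>u\<in>V. \<Sum>w\<in>V. card {v\<in>U. R v u \<and> R v w})"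
proof -
  have row_square: "(card {u\<in>V. R v u})\<^sup>2 = card {p\<in>V \<times> V. R v (fst p) \<and> R v (snd p)}" for v
  proof -
    have "{p\<in>V \<times> V. R v (fst p) \<and> R v (snd p)} = {u\<in>V. R v u} \<times> {u\<in>V. R v u}"
      by auto
    then show ?thesis by (simp add: card_cartesian_product power2_eq_square)
  qed
  have "(\<Sum>v\<in>U. (card {u\<in>V. R v u})\<^sup>2)
        = (\<Sum>p\<in>V \<times> V. card {v\<in>U. R v (fst p) \<and> R v (snd p)})"
    using sum_card_filter_swap[of U "V \<times> V" "\<lambda>v p. R v (fst p) \<and> R v (snd p)"] assms
    by (simp add: row_square)
  also have "\<dots> = (\<Sum>u\<in>V. \<Sum>w\<in>V. card {v\<in>U. R v u \<and> R v w})"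
    by (simp add: sum.cartesian_product case_prod_beta)
  finally show ?thesis .
qed

lemma card_fibre_translation_action:
  fixes g :: "'x \<Rightarrow> 'a::{finite,field}"
  assumes "finite S"
    and shift_in: "\<And>c x. x \<in> S \<Longrightarrow> h c x \<in> S"
    and shift_value: "\<And>c x. x \<in> S \<Longrightarrow> g (h c x) = g x + c"
    and shift_inverse: "\<And>c x. x \<in> S \<Longrightarrow> h (-c) (h c x) = x"
  shows "card S = CARD('a) * card {x\<in>S. g x = a}"
proof -
  have same_size: "card {x\<in>S. g x = b} = card {x\<in>S. g x = a}" for b
  proof (rule bij_betw_same_card[of "h (a - b)"], rule bij_betwI[where g = "h (b - a)"])
    show "h (a - b) \<in> {x\<in>S. g x = b} \<rightarrow> {x\<in>S. g x = a}"
      using shift_in shift_value by auto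
    show "h (b - a) \<in> {x\<in>S. g x = a} \<rightarrow> {x\<in>S. g x = b}"
      using shift_in shift_value by auto
    show "h (b - a) (h (a - b) x) = x" if "x \<in> {x\<in>S. g x = b}" for x
      using shift_inverse[of x "a - b"] that by simp
    show "h (a - b) (h (b - a) y) = y" if "y \<in> {x\<in>S. g x = a}" for y
      using shift_inverse[of y "b - a"] that by simp
  qed
  have "card S = card (\<Union>b. {x\<in>S. g x = b})"
    by (rule arg_cong[where f = card]) auto
  also have "\<dots> = (\<Sum>b\<in>UNIV. card {x\<in>S. g x = b})"
    by (rule card_UN_disjoint) (auto simp: \<open>finite S\<close>)
  also have "\<dots> = (\<Sum>b\<in>(UNIV :: 'a set). card {x\<in>S. g x = a})"
    by (rule sum.cong[OF refl], rule same_size)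
  also have "\<dots> = CARD('a) * card {x\<in>S. g x = a}"
    by simp
  finally show ?thesis .
qed

lemma translate_back: "(v + c *s v0) + (-c) *s v0 = (v :: 'a::ring ^ 'n)"
  by (simp add: vec_eq_iff algebra_simps)

lemma NlamV_eq: "NlamV B lam W v = {u\<in>W. B v u = lam}"
  by (auto simp: NlamV_def Nlam_def)

section \<open>Level sets of a non-degenerate bilinear form\<close>

context
  fixes B :: "('a::{finite,field}) ^ 'n \<Rightarrow> 'a ^ 'n \<Rightarrow> 'a"
  assumes bilinear: "bilinear_form B"
begin

lemma B_add_scale_left: "B (v + c *s v') u = B v u + c * B v' u"
  using bilinear unfolding bilinear_form_def by simp

lemma B_add_scale_right: "B v (w + c *s u) = B v w + c * B v u"
  using bilinear unfolding bilinear_form_def by simp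

lemma B_scale_left: "B (c *s v) u = c * B v u"
  using bilinear unfolding bilinear_form_def by simp

lemma B_scale_right: "B v (c *s u) = c * B v u"
  using bilinear unfolding bilinear_form_def by simp

lemma B_zero_right: "B v 0 = 0"
  using B_scale_right[of v 0 0] by simp

lemma NlamV_remove_zero:
  assumes "lam \<noteq> 0"
  shows "NlamV B lam V v = NlamV B lam (V - {0}) v"
  using assms by (auto simp: NlamV_eq B_zero_right)

context
  assumes nondeg: "nondegenerate B"
begin

lemma exists_left_unit:
  assumes "u \<noteq> 0"
  obtains v0 where "B v0 u = 1"
proof -
  obtain v1 where "B v1 u \<noteq> 0"
    using nondeg assms unfolding nondegenerate_def by blast
  then have "B (inverse (B v1 u) *s v1) u = 1"
    by (simp add: B_scale_left)
  then show ?thesis by (rule that)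
qed

text \<open>For u \<noteq> 0 every level set of v \<mapsto> B v u is an affine hyperplane: it has
  q^(d-1) elements.\<close>

lemma card_level_set:
  assumes "u \<noteq> 0"
  shows "card {v. B v u = a} = CARD('a) ^ (CARD('n) - 1)"
proof -
  obtain v0 where v0: "B v0 u = 1"
    using exists_left_unit[OF assms] .
  have "CARD('a) * card {v\<in>UNIV. B v u = a} = card (UNIV :: ('a ^ 'n) set)"
    by (rule card_fibre_translation_action[where h = "\<lambda>c v. v + c *s v0", symmetric])
       (auto simp: B_add_scale_left v0 translate_back)
  also have "\<dots> = CARD('a) * CARD('a) ^ (CARD('n) - 1)"
    by (simp add: power_Suc[symmetric])
  finally show ?thesis by simp
qed

lemma kernel_inclusion_imp_multiple:
  assumes unit: "B v0 u = 1" and kernel: "\<And>v. B v u = 0 \<Longrightarrow> B v w = 0"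
  shows "w = B v0 w *s u"
proof -
  let ?c = "B v0 w"
  have "B v (w + (- ?c) *s u) = 0" for v
  proof -
    have "B (v + (- B v u) *s v0) u = 0"
      using unit B_add_scale_left[of v "- B v u" v0 u] by simp
    then have "B (v + (- B v u) *s v0) w = 0"
      by (rule kernel)
    then show ?thesis
      using B_add_scale_left[of v "- B v u" v0 w] B_add_scale_right[of v w "- ?c" u]
      by (simp add: mult.commute)
  qed
  then have "w + (- ?c) *s u = 0"
    using nondeg unfolding nondegenerate_def by blast
  then show ?thesis
    by (simp add: vec_eq_iff algebra_simps)
qed

text \<open>For distinct u \<noteq> 0, w and lambda \<noteq> 0 the two lambda-level sets meet in at most
  q^(d-2) points: either w is a multiple of u (and the intersection is empty), or some
  v2 with B v2 u = 0, B v2 w = 1 lets the translation argument run inside the first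
  level set.\<close>

lemma card_two_level_sets:
  assumes "u \<noteq> 0" "u \<noteq> w" "lam \<noteq> 0"
  shows "CARD('a) * card {v. B v u = lam \<and> B v w = lam} \<le> CARD('a) ^ (CARD('n) - 1)"
proof (cases "\<exists>v2. B v2 u = 0 \<and> B v2 w = 1")
  case True
  then obtain v2 where v2: "B v2 u = 0" "B v2 w = 1" by blast
  have "CARD('a) * card {v\<in>{v. B v u = lam}. B v w = lam} = card {v. B v u = lam}"
    by (rule card_fibre_translation_action[where h = "\<lambda>c v. v + c *s v2", symmetric])
       (auto simp: B_add_scale_left v2 translate_back)
  also have "\<dots> = CARD('a) ^ (CARD('n) - 1)"
    by (rule card_level_set[OF assms(1)])
  finally show ?thesis by simp
next
  case False
  have kernel: "B v w = 0" if "B v u = 0" for v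
  proof (rule ccontr)
    assume "B v w \<noteq> 0"
    then have "B (inverse (B v w) *s v) u = 0 \<and> B (inverse (B v w) *s v) w = 1"
      using that by (simp add: B_scale_left)
    with False show False by blast
  qed
  obtain v0 where "B v0 u = 1"
    using exists_left_unit[OF assms(1)] .
  then obtain c where c: "w = c *s u"
    using kernel_inclusion_imp_multiple[OF _ kernel] by blast
  have empty: "{v. B v u = lam \<and> B v w = lam} = {}"
  proof (rule ccontr)
    assume "{v. B v u = lam \<and> B v w = lam} \<noteq> {}"
    then have "c * lam = lam"
      by (auto simp: c B_scale_right)
    then have "c = 1" using \<open>lam \<noteq> 0\<close> by simp
    with c \<open>u \<noteq> w\<close> show False by simp
  qed
  show ?thesis unfolding empty by simp
qed

section \<open>Moments of the neighbourhood sizes\<close>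

text \<open>First moment: every u \<in> W \<subseteq> F^d - {0} has exactly q^(d-1) lambda-neighbours.\<close>

lemma sum_card_NlamV:
  assumes "0 \<notin> W"
  shows "(\<Sum>v\<in>UNIV. real (card (NlamV B lam W v))) = real (card W) * real CARD('a) ^ (CARD('n) - 1)"
proof -
  have "(\<Sum>v\<in>UNIV. card (NlamV B lam W v)) = (\<Sum>u\<in>W. card {v. B v u = lam})"
    using sum_card_filter_swap[of UNIV W "\<lambda>v u. B v u = lam"] by (simp add: NlamV_eq)
  also have "\<dots> = (\<Sum>u\<in>W. CARD('a) ^ (CARD('n) - 1))"
    by (rule sum.cong[OF refl]) (use assms in \<open>blast intro: card_level_set\<close>)
  also have "\<dots> = card W * CARD('a) ^ (CARD('n) - 1)"
    by simp
  finally show ?thesis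
    by (metis of_nat_mult of_nat_power of_nat_sum)
qed

text \<open>Second moment: pairs u = w contribute q^(d-1) each, pairs u \<noteq> w at most
  q^(d-2) each.\<close>

lemma sum_card_NlamV_square:
  assumes "0 \<notin> W" "lam \<noteq> 0"
  defines "q \<equiv> real CARD('a)" and "M \<equiv> real CARD('a) ^ (CARD('n) - 1)"
  shows "q * (\<Sum>v\<in>UNIV. (real (card (NlamV B lam W v)))\<^sup>2)
         \<le> real (card W) * real (card W) * M + real (card W) * (q - 1) * M"
proof -
  have pair_bound: "q * real (card {v. B v u = lam \<and> B v w = lam})
                    \<le> M + (if u = w then (q - 1) * M else 0)"
    if "u \<in> W" "w \<in> W" for u w
  proof -
    have "u \<noteq> 0" using assms(1) that by blast
    show ?thesis
    proof (cases "u = w")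
      case True
      then have "real (card {v. B v u = lam \<and> B v w = lam}) = M"
        using card_level_set[OF \<open>u \<noteq> 0\<close>, of lam] by (simp add: M_def)
      with True show ?thesis by (simp add: algebra_simps)
    next
      case False
      have "real (CARD('a) * card {v. B v u = lam \<and> B v w = lam})
            \<le> real (CARD('a) ^ (CARD('n) - 1))"
        using card_two_level_sets[OF \<open>u \<noteq> 0\<close> False assms(2)] by (simp only: of_nat_le_iff)
      with False show ?thesis by (simp add: q_def M_def)
    qed
  qed
  have pair_count: "(\<Sum>v\<in>UNIV. (card (NlamV B lam W v))\<^sup>2)
        = (\<Sum>u\<in>W. \<Sum>w\<in>W. card {v. B v u = lam \<and> B v w = lam})"
    using sum_card_filter_square[of UNIV W "\<lambda>v u. B v u = lam"] by (simp add: NlamV_eq)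
  have "q * (\<Sum>v\<in>UNIV. (real (card (NlamV B lam W v)))\<^sup>2)
        = q * real (\<Sum>v\<in>UNIV. (card (NlamV B lam W v))\<^sup>2)"
    by simp
  also have "\<dots> = (\<Sum>u\<in>W. \<Sum>w\<in>W. q * real (card {v. B v u = lam \<and> B v w = lam}))"
    by (simp add: pair_count sum_distrib_left)
  also have "\<dots> \<le> (\<Sum>u\<in>W. \<Sum>w\<in>W. M + (if u = w then (q - 1) * M else 0))"
    by (intro sum_mono pair_bound)
  also have "\<dots> = (\<Sum>u\<in>W. real (card W) * M + (q - 1) * M)"
    by (intro sum.cong refl) (simp add: sum.distrib sum.delta')
  also have "\<dots> = real (card W) * real (card W) * M + real (card W) * (q - 1) * M"
    by (simp add: distrib_left mult.assoc)
  finally show ?thesis .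
qed

end

end

lemma deviation_from_moments:
  fixes A :: "'x \<Rightarrow> real"
  assumes "real (card S) = q * M" "q > 0"
    and first: "(\<Sum>v\<in>S. A v) = x * M"
    and second: "q * (\<Sum>v\<in>S. (A v)\<^sup>2) \<le> x * x * M + x * (q - 1) * M"
  shows "q * (\<Sum>v\<in>S. (A v - n / q)\<^sup>2) \<le> M * ((n - x)\<^sup>2 + x * (q - 1))"
proof -
  have "(\<Sum>v\<in>S. (A v - n / q)\<^sup>2)
        = (\<Sum>v\<in>S. (A v)\<^sup>2) - 2 * (n / q) * (\<Sum>v\<in>S. A v) + real (card S) * (n / q)\<^sup>2"
    by (simp add: power2_diff sum_subtractf sum.distrib sum_distrib_left sum_distrib_right
        sum_divide_distrib mult_ac)
  then have "q * (\<Sum>v\<in>S. (A v - n / q)\<^sup>2) = q * (\<Sum>v\<in>S. (A v)\<^sup>2) - 2 * n * x * M + M * n\<^sup>2"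
    using assms(1,2) first by (simp add: field_simps power2_eq_square)
  with second show ?thesis
    by (simp add: algebra_simps power2_eq_square)
qed

text \<open>The final numerical inequality; x is the number of nonzero vectors in V.\<close>

lemma deviation_bound_arith:
  fixes q n x :: real
  assumes "q \<ge> 2" "n \<ge> 1" "x = n \<or> x = n - 1"
  shows "(n - x)\<^sup>2 + x * (q - 1) < q * n"
  using assms by (auto simp: algebra_simps power2_eq_square)

theorem lemma2p1:
  fixes B :: "('a::{finite,field}) ^ 'n \<Rightarrow> 'a ^ 'n \<Rightarrow> 'a"
    and lam :: 'a
    and V :: "('a ^ 'n) set"
  assumes "bilinear_form B"
    and "nondegenerate B"
    and "lam \<noteq> 0"
    and "V \<noteq> {}"
  shows "(\<Sum>v\<in>(UNIV :: ('a ^ 'n) set).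
            (real (card (NlamV B lam V v)) - real (card V) / real CARD('a))\<^sup>2)
         < real CARD('a) ^ (CARD('n) - 1) * real (card V)"
proof -
  define W where "W = V - {0}"
  define A where "A v = real (card (NlamV B lam W v))" for v
  define q where "q = real CARD('a)"
  define M where "M = real CARD('a) ^ (CARD('n) - 1)"
  define n where "n = real (card V)"
  define x where "x = real (card W)"
  have "card {0::'a, 1} \<le> CARD('a)"
    by (rule card_mono) auto
  then have q_ge_2: "q \<ge> 2" by (simp add: q_def)
  have n_ge_1: "n \<ge> 1"
    using assms(4) by (simp add: n_def Suc_leI card_gt_0_iff)
  have x_cases: "x = n \<or> x = n - 1"
    using n_ge_1 by (auto simp: x_def n_def W_def card_Diff_singleton_if of_nat_diff)
  have card_space: "real CARD('a ^ 'n) = q * M"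
    by (simp add: q_def M_def power_Suc[symmetric])
  have first: "(\<Sum>v\<in>UNIV. A v) = x * M"
    using sum_card_NlamV[OF assms(1,2), of W lam] by (simp add: A_def x_def M_def W_def)
  have second: "q * (\<Sum>v\<in>UNIV. (A v)\<^sup>2) \<le> x * x * M + x * (q - 1) * M"
    using sum_card_NlamV_square[OF assms(1,2) _ assms(3), of W]
    by (simp add: A_def x_def M_def q_def W_def)
  have "q * (\<Sum>v\<in>UNIV. (A v - n / q)\<^sup>2) \<le> M * ((n - x)\<^sup>2 + x * (q - 1))"
    using q_ge_2 by (intro deviation_from_moments[OF card_space _ first second]) simp
  also have "\<dots> < M * (q * n)"
    using deviation_bound_arith[OF q_ge_2 n_ge_1 x_cases] by (simp add: M_def)
  finally have "(\<Sum>v\<in>UNIV. (A v - n / q)\<^sup>2) < M * n"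
    using q_ge_2 by (simp add: algebra_simps)
  then show ?thesis
    using NlamV_remove_zero[OF assms(1,3)] by (simp add: A_def W_def q_def M_def n_def)
qed

end
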